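(* For the boundary Markov chain $(M_n)$ started from any fixed initial state, almost surely \[ \limsup_{n\to\infty} \frac{M_n}{n^{2/3}\log n} < \infty . \]
   Context: The boundary Markov chain is the Markov chain $(M_n)_{n\ge0}$ on $\{0,1,2,\dots\}$ with $M_{n+1}=M_n+X_n$. Given $M_n=m$, its step $X_n$ has the law \[ \mathbb P(X_n=1\mid M_n=m)=\frac{2m+3}{3m+3}. \] For $1\le k\le m$, \[ \mathbb P(X_n=-k\mid M_n=m)=\frac{2(2k-2)!}{(k-1)!(k+1)!}\cdot\frac{m!^2(2m-2k+1)!}{(m-k)!^2(2m+1)!}. \] *)

theory Defs
  imports "HOL-Probability.Probability"
begin

definition step_prob :: "nat \<Rightarrow> int \<Rightarrow> real" where
  "step_prob m x =
    (if x = 1 then (2 * real m + 3) / (3 * real m + 3)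
     else if - int m \<le> x \<and> x \<le> -1 then
       (let k = nat (- x) in
         (2 * fact (2 * k - 2) / (fact (k - 1) * fact (k + 1))) *
         ((fact m) ^ 2 * fact (2 * m - 2 * k + 1) / ((fact (m - k)) ^ 2 * fact (2 * m + 1))))
     else 0)"

definition boundary_trans :: "nat \<Rightarrow> nat \<Rightarrow> real" where
  "boundary_trans m m' = step_prob m (int m' - int m)"

definition boundary_chain :: "'a measure \<Rightarrow> (nat \<Rightarrow> 'a \<Rightarrow> nat) \<Rightarrow> nat \<Rightarrow> bool" where
  "boundary_chain P M m0 \<longleftrightarrow>
     prob_space P \<and>
     (\<forall>n. M n \<in> measurable P (count_space UNIV)) \<and>
     measure P {\<omega> \<in> space P. M 0 \<omega> = m0} = 1 \<and>
     (\<forall>n xs y. length xs = Suc n \<longrightarrow>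
        measure P {\<omega> \<in> space P. (\<forall>i\<le>n. M i \<omega> = xs ! i) \<and> M (Suc n) \<omega> = y}
        = measure P {\<omega> \<in> space P. \<forall>i\<le>n. M i \<omega> = xs ! i} * boundary_trans (xs ! n) y)"

end

theory Submission
  imports Defs
begin

(* The function F = boundary_lyapunov, F y = 4^y y (y + 1) / ((2 y + 1) (2y choose y)), has
   drift exactly 4/3 under the chain, so F (M n) - 4 n / 3 is a martingale, and F y is of
   order y^(3/2).  A maximal inequality bounds the probability that
   F (M i) reaches V = 2^j (j + 1)^(3/2) for some i <= 2^(j + 1) by O(j^(-3/2)), which is
   summable.  By Borel-Cantelli, almost surely F (M n) < V on every dyadic block from some j on,
   hence M n ^ 3 <= 2 V^2 = O(n^2 (log n)^3). *)

(* central_binom_ratio n = (2n choose n) / 4^n *)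
fun central_binom_ratio :: "nat \<Rightarrow> real" where
  "central_binom_ratio 0 = 1"
| "central_binom_ratio (Suc n) = central_binom_ratio n * (2 * real n + 1) / (2 * real n + 2)"

lemma central_binom_ratio_pos: "central_binom_ratio n > 0"
  by (induction n) auto

lemma fact_double_eq: "fact (2 * n) = 4 ^ n * central_binom_ratio n * (fact n) ^ 2"
proof (induction n)
  case 0
  then show ?case by simp
next
  case (Suc n)
  have "fact (2 * Suc n) = (2 * real n + 2) * (2 * real n + 1) * (fact (2 * n) :: real)"
    by (simp add: algebra_simps)
  with Suc show ?case
    by (simp add: field_simps power2_eq_square)
qed

lemma fact_double_Suc:
  "fact (2 * n + 1) = (2 * real n + 1) * 4 ^ n * central_binom_ratio n * (fact n) ^ 2"
  using fact_double_eq[of n] by (simp add: algebra_simps)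

lemma central_binom_ratio_sq_le: "central_binom_ratio n ^ 2 * (2 * real n + 1) \<le> 1"
proof (induction n)
  case 0
  then show ?case by simp
next
  case (Suc n)
  have "(2 * real n + 1) * (2 * real n + 3) \<le> (2 * real n + 2) ^ 2"
    by (simp add: power2_eq_square algebra_simps)
  then have shrink: "(2 * real n + 1) * (2 * real n + 3) / (2 * real n + 2) ^ 2 \<le> 1"
    by simp
  have "central_binom_ratio (Suc n) ^ 2 * (2 * real (Suc n) + 1)
      = central_binom_ratio n ^ 2 * (2 * real n + 1)
        * ((2 * real n + 1) * (2 * real n + 3) / (2 * real n + 2) ^ 2)"
    by (simp add: power2_eq_square field_simps)
  also have "\<dots> \<le> 1 * 1"
    using Suc.IH shrink by (intro mult_mono) auto
  finally show ?case by simp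
qed

definition boundary_lyapunov :: "nat \<Rightarrow> real" where
  "boundary_lyapunov y = real y * (real y + 1) / ((2 * real y + 1) * central_binom_ratio y)"

lemma boundary_lyapunov_nonneg: "boundary_lyapunov y \<ge> 0"
  unfolding boundary_lyapunov_def using central_binom_ratio_pos[of y] by simp

lemma cube_le_boundary_lyapunov_sq: "real y ^ 3 \<le> 2 * boundary_lyapunov y ^ 2"
proof -
  have "(2 * real y + 1) ^ 2 * central_binom_ratio y ^ 2 \<le> 2 * real y + 1"
    using mult_left_mono[OF central_binom_ratio_sq_le[of y], of "2 * real y + 1"]
    by (simp add: power2_eq_square algebra_simps)
  moreover have "(2 * real y + 1) ^ 2 * central_binom_ratio y ^ 2 > 0"
    using central_binom_ratio_pos[of y] by simp
  ultimately have "(real y * (real y + 1)) ^ 2 / (2 * real y + 1) \<le> boundary_lyapunov y ^ 2"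
    unfolding boundary_lyapunov_def power_divide power_mult_distrib
    by (intro divide_left_mono) auto
  moreover have "real y ^ 3 \<le> 2 * ((real y * (real y + 1)) ^ 2 / (2 * real y + 1))"
    by (simp add: field_simps power2_eq_square power3_eq_cube)
  ultimately show ?thesis by simp
qed

definition down_weight :: "nat \<Rightarrow> real" where
  "down_weight j = central_binom_ratio j / (2 * ((real j + 1) * (real j + 2)))"

lemma step_prob_down:
  "step_prob (y + j + 1) (- (int j + 1))
     = down_weight j * (2 * real y + 1) * central_binom_ratio y
       / ((2 * real (y + j + 1) + 1) * central_binom_ratio (y + j + 1))"
proof -
  define m where "m = y + j + 1"
  have fact_j2: "fact (j + 2) = (real j + 1) * (real j + 2) * fact j"
    by (simp add: numeral_2_eq_2 algebra_simps)
  have "step_prob m (- (int j + 1)) =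
      2 * fact (2 * j) / (fact j * fact (j + 2)) *
      ((fact m) ^ 2 * fact (2 * y + 1) / ((fact y) ^ 2 * fact (2 * m + 1)))"
  proof -
    have "nat (- (- (int j + 1))) = j + 1" "2 * (j + 1) - 2 = 2 * j"
      "2 * m - 2 * (j + 1) + 1 = 2 * y + 1" "m - (j + 1) = y"
      unfolding m_def by simp_all
    then show ?thesis
      unfolding step_prob_def Let_def m_def by (simp add: numeral_2_eq_2)
  qed
  also have "\<dots> = 2 * (4 ^ j * central_binom_ratio j * (fact j) ^ 2)
        / (fact j * ((real j + 1) * (real j + 2) * fact j))
      * ((fact m) ^ 2 * ((2 * real y + 1) * 4 ^ y * central_binom_ratio y * (fact y) ^ 2)
        / ((fact y) ^ 2 * ((2 * real m + 1) * 4 ^ m * central_binom_ratio m * (fact m) ^ 2)))"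
    by (simp only: fact_double_eq fact_double_Suc fact_j2)
  also have "\<dots> = 2 * 4 ^ j * central_binom_ratio j / ((real j + 1) * (real j + 2))
      * ((2 * real y + 1) * 4 ^ y * central_binom_ratio y
        / ((2 * real m + 1) * (4 * 4 ^ j * 4 ^ y) * central_binom_ratio m))"
    by (simp add: power2_eq_square m_def power_add)
  also have "\<dots> = down_weight j * (2 * real y + 1) * central_binom_ratio y
      / ((2 * real m + 1) * central_binom_ratio m)"
    by (simp add: down_weight_def divide_simps)
  finally show ?thesis
    unfolding m_def .
qed

lemma sum_down_weight: "(\<Sum>j<m. down_weight j) = 1/3 - central_binom_ratio m / (3 * (real m + 1))"
proof (induction m)
  case 0
  then show ?case by simp
next
  case (Suc m)
  have "(\<Sum>j<Suc m. down_weight j)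
      = 1/3 - central_binom_ratio m / (3 * (real m + 1))
        + central_binom_ratio m / (2 * (real m + 1) * (real m + 2))"
    unfolding sum.lessThan_Suc Suc.IH by (simp add: down_weight_def)
  also have "\<dots> = 1/3 - central_binom_ratio (Suc m) / (3 * (real (Suc m) + 1))"
    by (simp add: divide_simps) (simp add: algebra_simps)
  finally show ?case .
qed

lemma sum_down_weight_linear:
  "(\<Sum>j<m. down_weight j * (real m - real j)) = (real m - 1) / 3 + 2/3 * central_binom_ratio (Suc m)"
proof (induction m)
  case 0
  then show ?case by simp
next
  case (Suc m)
  have "(\<Sum>j<Suc m. down_weight j * (real (Suc m) - real j))
      = (\<Sum>j<Suc m. down_weight j * (real m - real j) + down_weight j)"
    by (intro sum.cong) (simp_all add: algebra_simps)
  also have "\<dots> = (\<Sum>j<m. down_weight j * (real m - real j)) + (\<Sum>j<Suc m. down_weight j)"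
    by (simp add: sum.distrib)
  also have "\<dots> = (real (Suc m) - 1) / 3 + 2/3 * central_binom_ratio (Suc (Suc m))"
    unfolding Suc.IH sum_down_weight by (simp add: divide_simps) (simp add: algebra_simps)
  finally show ?case .
qed

lemma sum_down_weight_quadratic:
  "(\<Sum>j<m. down_weight j * (real m - real j - 1) * (real m - real j))
     = (real m + 1) * (real m - 4) / 3 + 4/3 * (2 * real m + 1) * central_binom_ratio m"
proof (induction m)
  case 0
  then show ?case by simp
next
  case (Suc m)
  have "(\<Sum>j<Suc m. down_weight j * (real (Suc m) - real j - 1) * (real (Suc m) - real j))
      = (\<Sum>j<m. down_weight j * (real m - real j - 1) * (real m - real j)
          + 2 * (down_weight j * (real m - real j)))"
    by (simp add: algebra_simps)
  also have "\<dots> = (\<Sum>j<m. down_weight j * (real m - real j - 1) * (real m - real j))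
        + 2 * (\<Sum>j<m. down_weight j * (real m - real j))"
    by (simp add: sum.distrib sum_distrib_left)
  also have "\<dots> = (real (Suc m) + 1) * (real (Suc m) - 4) / 3
      + 4/3 * (2 * real (Suc m) + 1) * central_binom_ratio (Suc m)"
    unfolding Suc.IH sum_down_weight_linear by (simp add: divide_simps) (simp add: algebra_simps)
  finally show ?case .
qed

lemma boundary_trans_mult_lyapunov_down:
  "(\<Sum>y<m. boundary_trans m y * boundary_lyapunov y)
     = (\<Sum>j<m. down_weight j * (real m - real j - 1) * (real m - real j))
       / ((2 * real m + 1) * central_binom_ratio m)"
proof -
  have "boundary_trans m (m - Suc j) * boundary_lyapunov (m - Suc j)
      = down_weight j * (real m - real j - 1) * (real m - real j)
        / ((2 * real m + 1) * central_binom_ratio m)" if "j < m" for j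
  proof -
    define y where "y = m - Suc j"
    have m: "m = y + j + 1" and jump: "int y - int m = - (int j + 1)"
      using that unfolding y_def by auto
    have "boundary_trans m y = step_prob m (- (int j + 1))"
      unfolding boundary_trans_def jump ..
    also have "\<dots> = down_weight j * (2 * real y + 1) * central_binom_ratio y
        / ((2 * real m + 1) * central_binom_ratio m)"
      unfolding m by (rule step_prob_down)
    finally have "boundary_trans m y * boundary_lyapunov y
        = down_weight j * real y * (real y + 1) / ((2 * real m + 1) * central_binom_ratio m)"
      unfolding boundary_lyapunov_def using central_binom_ratio_pos[of y] central_binom_ratio_pos[of m]
      by (simp add: divide_simps del: central_binom_ratio.simps)
    then show ?thesis
      unfolding y_def using that by (simp add: algebra_simps)
  qed
  then have "(\<Sum>j<m. boundary_trans m (m - Suc j) * boundary_lyapunov (m - Suc j))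
      = (\<Sum>j<m. down_weight j * (real m - real j - 1) * (real m - real j)
        / ((2 * real m + 1) * central_binom_ratio m))"
    by (intro sum.cong) auto
  then show ?thesis
    using sum.nat_diff_reindex[of "\<lambda>y. boundary_trans m y * boundary_lyapunov y" m]
    by (simp add: sum_divide_distrib)
qed

lemma boundary_trans_lyapunov_drift:
  "(\<Sum>y\<le>Suc m. boundary_trans m y * boundary_lyapunov y) = boundary_lyapunov m + 4/3"
proof -
  have "{..Suc m} = insert (Suc m) (insert m {..<m})"
    by auto
  moreover have "boundary_trans m m = 0"
    unfolding boundary_trans_def step_prob_def by simp
  moreover have "boundary_trans m (Suc m) = (2 * real m + 3) / (3 * real m + 3)"
    unfolding boundary_trans_def step_prob_def by simp
  ultimately have "(\<Sum>y\<le>Suc m. boundary_trans m y * boundary_lyapunov y)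
      = (2 * real m + 3) / (3 * real m + 3) * boundary_lyapunov (Suc m)
        + ((real m + 1) * (real m - 4) / 3 + 4/3 * (2 * real m + 1) * central_binom_ratio m)
          / ((2 * real m + 1) * central_binom_ratio m)"
    by (simp add: boundary_trans_mult_lyapunov_down sum_down_weight_quadratic)
  also have "\<dots> = boundary_lyapunov m + 4/3"
    using central_binom_ratio_pos[of m] unfolding boundary_lyapunov_def
    by (simp add: divide_simps) (simp add: algebra_simps)
  finally show ?thesis .
qed

lemma growth_ratio_le:
  fixes x n j :: nat
  assumes cube: "real x ^ 3 \<le> 2 * 4 ^ j * (real j + 1) ^ 3" and "2 ^ j \<le> n" and "1 \<le> j"
  shows "real x / (real n powr (2/3) * ln (real n)) \<le> 4 / ln 2"
proof -
  define N where "N = real n powr (2/3)"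
  define L where "L = ln (real n)"
  have "(2::nat) \<le> 2 ^ j"
    using self_le_power[of "2::nat" j] \<open>1 \<le> j\<close> by simp
  then have n2: "2 \<le> real n"
    using \<open>2 ^ j \<le> n\<close> by linarith
  then have L: "0 < L" and N: "0 < N"
    unfolding L_def N_def by auto
  have N3: "N ^ 3 = real n ^ 2"
  proof -
    have "N ^ 3 = real n powr (real 3 * (2/3))"
      unfolding N_def using n2 by (intro powr_power) auto
    then show ?thesis
      using n2 by (simp add: powr_realpow)
  qed
  have pow_le: "(2::real) ^ j \<le> real n"
    using \<open>2 ^ j \<le> n\<close> by (metis of_nat_le_iff of_nat_numeral of_nat_power)
  have "real j + 1 \<le> 2 * (L / ln 2)"
    using le_log2_of_power[OF \<open>2 ^ j \<le> n\<close>] \<open>1 \<le> j\<close> unfolding L_def log_def by linarith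
  then have "(real j + 1) ^ 3 \<le> (2 * (L / ln 2)) ^ 3"
    by (intro power_mono) auto
  moreover have "(4::real) ^ j \<le> real n ^ 2"
    using power_mono[OF pow_le, of 2] by (simp add: power2_eq_square power_mult_distrib[symmetric])
  ultimately have "2 * 4 ^ j * (real j + 1) ^ 3 \<le> 2 * real n ^ 2 * (2 * (L / ln 2)) ^ 3"
    by (intro mult_mono) auto
  with cube have "real x ^ 3 \<le> 2 * real n ^ 2 * (2 * (L / ln 2)) ^ 3"
    by linarith
  also have "\<dots> = 16 * (N ^ 3 * L ^ 3 / ln 2 ^ 3)"
    by (simp add: N3 power_mult_distrib power_divide)
  also have "\<dots> \<le> 64 * (N ^ 3 * L ^ 3 / ln 2 ^ 3)"
    using N L by (intro mult_right_mono) auto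
  also have "\<dots> = (4 * N * L / ln 2) ^ 3"
    by (simp add: power_mult_distrib power_divide)
  finally have "real x ^ Suc 2 \<le> (4 / ln 2 * (N * L)) ^ Suc 2"
    by (simp add: mult_ac)
  then have "real x \<le> 4 / ln 2 * (N * L)"
    by (rule power_le_imp_le_base) (use N L in simp)
  then show ?thesis
    using N L unfolding N_def[symmetric] L_def[symmetric] by (intro pos_divide_le_eq[THEN iffD2]) simp_all
qed

definition dyadic_level :: "nat \<Rightarrow> real" where
  "dyadic_level j = 2 ^ j * (real j + 1) powr (3/2)"

lemma dyadic_level_pos: "0 < dyadic_level j"
  unfolding dyadic_level_def by simp

lemma dyadic_level_sq: "dyadic_level j ^ 2 = 4 ^ j * (real j + 1) ^ 3"
proof -
  have "((real j + 1) powr (3/2)) ^ 2 = (real j + 1) powr (real 2 * (3/2))"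
    by (rule powr_power) simp
  also have "\<dots> = (real j + 1) ^ 3"
    by simp
  finally have "((real j + 1) powr (3/2)) ^ 2 = (real j + 1) ^ 3" .
  moreover have "((2::real) ^ j) ^ 2 = 4 ^ j"
    by (simp add: power2_eq_square power_mult_distrib[symmetric])
  ultimately show ?thesis
    unfolding dyadic_level_def power_mult_distrib by simp
qed

lemma cube_le_of_boundary_lyapunov_le:
  assumes "boundary_lyapunov y \<le> dyadic_level j"
  shows "real y ^ 3 \<le> 2 * 4 ^ j * (real j + 1) ^ 3"
proof -
  have "boundary_lyapunov y ^ 2 \<le> dyadic_level j ^ 2"
    using assms boundary_lyapunov_nonneg by (intro power_mono)
  then show ?thesis
    using cube_le_boundary_lyapunov_sq[of y] unfolding dyadic_level_sq by linarith
qed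

lemma limsup_growth_ratio_finite:
  fixes x :: "nat \<Rightarrow> nat"
  assumes "eventually (\<lambda>j. \<forall>i\<le>2 ^ Suc j. boundary_lyapunov (x i) < dyadic_level j) sequentially"
  shows "limsup (\<lambda>n. ereal (real (x n) / (real n powr (2/3) * ln (real n)))) < \<infinity>"
proof -
  obtain J where J: "\<And>j i. J \<le> j \<Longrightarrow> i \<le> 2 ^ Suc j \<Longrightarrow> boundary_lyapunov (x i) < dyadic_level j"
    using assms unfolding eventually_sequentially by blast
  have "real (x n) / (real n powr (2/3) * ln (real n)) \<le> 4 / ln 2" if "2 ^ max J 1 \<le> n" for n
  proof -
    have "(1::nat) \<le> 2 ^ max J 1"
      by simp
    with that have "1 \<le> n"
      by linarith
    then obtain j where j: "2 ^ j \<le> n" "n < 2 ^ Suc j"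
      using ex_power_ivl1[of 2 n] by auto
    have "(2::nat) ^ max J 1 < 2 ^ Suc j"
      using that j(2) by linarith
    then have "max J 1 < Suc j"
      by (rule power_less_imp_less_exp[rotated]) simp
    then have "J \<le> j" "1 \<le> j"
      by auto
    then have "boundary_lyapunov (x n) < dyadic_level j"
      using J j(2) by simp
    then have "real (x n) ^ 3 \<le> 2 * 4 ^ j * (real j + 1) ^ 3"
      by (intro cube_le_of_boundary_lyapunov_le less_imp_le)
    then show ?thesis
      using growth_ratio_le j(1) \<open>1 \<le> j\<close> by blast
  qed
  then have "limsup (\<lambda>n. ereal (real (x n) / (real n powr (2/3) * ln (real n)))) \<le> ereal (4 / ln 2)"
    by (intro Limsup_bounded eventually_sequentiallyI[of "2 ^ max J 1"]) simp
  then show ?thesis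
    by (rule le_less_trans) simp
qed

lemma boundary_trans_eq_0: "Suc m < y \<Longrightarrow> boundary_trans m y = 0"
  unfolding boundary_trans_def step_prob_def by auto

locale boundary_markov_chain =
  fixes P :: "'a measure" and M :: "nat \<Rightarrow> 'a \<Rightarrow> nat" and m0 :: nat
  assumes chain: "boundary_chain P M m0"
begin

sublocale prob_space P
  using chain unfolding boundary_chain_def by auto

lemma measurable_M [measurable]: "M i \<in> measurable P (count_space UNIV)"
  using chain unfolding boundary_chain_def by auto

definition cylinder :: "nat \<Rightarrow> nat list \<Rightarrow> 'a set" where
  "cylinder n xs = {\<omega> \<in> space P. \<forall>i\<le>n. M i \<omega> = xs ! i}"

definition hits_level :: "(nat \<Rightarrow> real) \<Rightarrow> real \<Rightarrow> nat \<Rightarrow> nat \<Rightarrow> 'a set" where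
  "hits_level f V n j = {\<omega> \<in> space P. \<exists>i\<in>{n..n + j}. V \<le> f (M i \<omega>)}"

lemma cylinder_sets [measurable]: "cylinder n xs \<in> sets P"
  unfolding cylinder_def by measurable

lemma hits_level_sets [measurable]: "hits_level f V n j \<in> sets P"
proof -
  have "hits_level f V n j = (\<Union>i\<in>{n..n + j}. {\<omega> \<in> space P. V \<le> f (M i \<omega>)})"
    unfolding hits_level_def by auto
  also have "\<dots> \<in> sets P"
    by measurable
  finally show ?thesis .
qed

lemma cylinder_snoc:
  assumes "length xs = Suc n"
  shows "cylinder (Suc n) (xs @ [y]) = {\<omega> \<in> cylinder n xs. M (Suc n) \<omega> = y}"
  using assms unfolding cylinder_def by (auto simp: nth_append le_Suc_eq)

lemma measure_cylinder_snoc: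
  assumes "length xs = Suc n"
  shows "prob (cylinder (Suc n) (xs @ [y])) = prob (cylinder n xs) * boundary_trans (xs ! n) y"
proof -
  have "cylinder (Suc n) (xs @ [y]) = {\<omega> \<in> space P. (\<forall>i\<le>n. M i \<omega> = xs ! i) \<and> M (Suc n) \<omega> = y}"
    using assms unfolding cylinder_def by (auto simp: nth_append le_Suc_eq)
  with chain assms show ?thesis
    unfolding boundary_chain_def cylinder_def by presburger
qed

(* This spares us proving that boundary_trans m is a probability distribution. *)
lemma measure_cylinder_mult_sum_boundary_trans_le:
  assumes "length xs = Suc n" and "finite Y"
  shows "prob (cylinder n xs) * (\<Sum>y\<in>Y. boundary_trans (xs ! n) y) \<le> prob (cylinder n xs)"
proof -
  have "prob (cylinder n xs) * (\<Sum>y\<in>Y. boundary_trans (xs ! n) y)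
      = (\<Sum>y\<in>Y. prob (cylinder (Suc n) (xs @ [y])))"
    by (simp add: measure_cylinder_snoc[OF assms(1)] sum_distrib_left)
  also have "\<dots> = prob (\<Union>y\<in>Y. cylinder (Suc n) (xs @ [y]))"
    by (intro finite_measure_finite_Union[symmetric] assms(2))
      (auto simp: disjoint_family_on_def cylinder_snoc[OF assms(1)])
  also have "\<dots> \<le> prob (cylinder n xs)"
    by (intro finite_measure_mono) (auto simp: cylinder_snoc[OF assms(1)])
  finally show ?thesis .
qed

lemma cylinder_jump_null:
  assumes "length xs = Suc n"
  shows "{\<omega> \<in> cylinder n xs. Suc (xs ! n) < M (Suc n) \<omega>} \<in> null_sets P"
proof -
  have "{\<omega> \<in> cylinder n xs. Suc (xs ! n) < M (Suc n) \<omega>}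
      = (\<Union>y\<in>{Suc (xs ! n)<..}. cylinder (Suc n) (xs @ [y]))"
    by (auto simp: cylinder_snoc[OF assms])
  also have "\<dots> \<in> null_sets P"
    by (intro null_sets_UN')
      (auto simp: measure_cylinder_snoc[OF assms] boundary_trans_eq_0 emeasure_eq_measure null_setsI)
  finally show ?thesis .
qed

lemma cylinder_hits_level_Suc_subset:
  assumes len: "length xs = Suc n" and below: "f (xs ! n) < V"
  shows "cylinder n xs \<inter> hits_level f V n (Suc j)
    \<subseteq> (\<Union>y\<le>Suc (xs ! n). cylinder (Suc n) (xs @ [y]) \<inter> hits_level f V (Suc n) j)
      \<union> {\<omega> \<in> cylinder n xs. Suc (xs ! n) < M (Suc n) \<omega>}"
proof
  fix \<omega> assume \<omega>: "\<omega> \<in> cylinder n xs \<inter> hits_level f V n (Suc j)"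
  then obtain i where i: "i \<in> {n..n + Suc j}" "V \<le> f (M i \<omega>)" and "\<omega> \<in> space P"
    unfolding hits_level_def by auto
  moreover have "i \<noteq> n"
    using \<omega> i(2) below unfolding cylinder_def by auto
  ultimately have "\<omega> \<in> hits_level f V (Suc n) j"
    unfolding hits_level_def by force
  moreover have "\<omega> \<in> cylinder (Suc n) (xs @ [M (Suc n) \<omega>])"
    using \<omega> unfolding cylinder_snoc[OF len] by auto
  ultimately show "\<omega> \<in> (\<Union>y\<le>Suc (xs ! n). cylinder (Suc n) (xs @ [y]) \<inter> hits_level f V (Suc n) j)
      \<union> {\<omega> \<in> cylinder n xs. Suc (xs ! n) < M (Suc n) \<omega>}"
    using \<omega> by (cases "M (Suc n) \<omega> \<le> Suc (xs ! n)") auto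
qed

lemma measure_cylinder_hits_level_Suc_le:
  assumes len: "length xs = Suc n" and below: "f (xs ! n) < V"
  shows "prob (cylinder n xs \<inter> hits_level f V n (Suc j))
    \<le> (\<Sum>y\<le>Suc (xs ! n). prob (cylinder (Suc n) (xs @ [y]) \<inter> hits_level f V (Suc n) j))"
proof -
  let ?A = "\<lambda>y. cylinder (Suc n) (xs @ [y]) \<inter> hits_level f V (Suc n) j"
  let ?N = "{\<omega> \<in> cylinder n xs. Suc (xs ! n) < M (Suc n) \<omega>}"
  have N: "?N \<in> null_sets P"
    by (rule cylinder_jump_null[OF len])
  have "prob (cylinder n xs \<inter> hits_level f V n (Suc j)) \<le> prob ((\<Union>y\<le>Suc (xs ! n). ?A y) \<union> ?N)"
    using N by (intro finite_measure_mono cylinder_hits_level_Suc_subset[of xs n f V j, OF len below]) auto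
  also have "\<dots> = prob (\<Union>y\<le>Suc (xs ! n). ?A y)"
    using N by (intro measure_Un_null_set) auto
  also have "\<dots> \<le> (\<Sum>y\<le>Suc (xs ! n). prob (?A y))"
    by (intro finite_measure_subadditive_finite) auto
  finally show ?thesis .
qed

lemma measure_cylinder_hits_level_le_of_above:
  assumes "0 \<le> c" and "0 < V" and "V \<le> f (xs ! n)"
  shows "prob (cylinder n xs \<inter> hits_level f V n j) \<le> prob (cylinder n xs) * (f (xs ! n) + c * real j) / V"
proof -
  have "prob (cylinder n xs \<inter> hits_level f V n j) \<le> prob (cylinder n xs) * 1"
    by (simp add: finite_measure_mono)
  also have "\<dots> \<le> prob (cylinder n xs) * ((f (xs ! n) + c * real j) / V)"
    using add_increasing2[OF _ assms(3), of "c * real j"] assms(1,2)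
    by (intro mult_left_mono) auto
  finally show ?thesis
    by simp
qed

(* Doob's maximal inequality for the nonnegative process f (M i), whose drift is at most c,
   proved by conditioning on the first step. *)
lemma measure_cylinder_hits_level_le:
  assumes f_nonneg: "\<And>y. 0 \<le> f y"
    and drift: "\<And>m. (\<Sum>y\<le>Suc m. boundary_trans m y * f y) \<le> f m + c"
    and "0 \<le> c" and "0 < V" and "length xs = Suc n"
  shows "prob (cylinder n xs \<inter> hits_level f V n j) \<le> prob (cylinder n xs) * (f (xs ! n) + c * real j) / V"
  using \<open>length xs = Suc n\<close>
proof (induction j arbitrary: n xs)
  case 0
  show ?case
  proof (cases "V \<le> f (xs ! n)")
    case False
    then have "cylinder n xs \<inter> hits_level f V n 0 = {}"
      unfolding cylinder_def hits_level_def by auto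
    with \<open>0 < V\<close> f_nonneg[of "xs ! n"] show ?thesis
      by simp
  qed (use \<open>0 \<le> c\<close> \<open>0 < V\<close> in \<open>rule measure_cylinder_hits_level_le_of_above\<close>)
next
  case (Suc j)
  show ?case
  proof (cases "V \<le> f (xs ! n)")
    case False
    define m where "m = xs ! n"
    define p where "p = prob (cylinder n xs)"
    have p: "0 \<le> p / V"
      using \<open>0 < V\<close> unfolding p_def by simp
    have "prob (cylinder n xs \<inter> hits_level f V n (Suc j))
        \<le> (\<Sum>y\<le>Suc m. prob (cylinder (Suc n) (xs @ [y]) \<inter> hits_level f V (Suc n) j))"
      unfolding m_def using Suc.prems False by (intro measure_cylinder_hits_level_Suc_le) auto
    also have "\<dots> \<le> (\<Sum>y\<le>Suc m. p * boundary_trans m y * (f y + c * real j) / V)"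
      using Suc.IH[of "xs @ [_]" "Suc n"] Suc.prems
      by (intro sum_mono) (simp add: measure_cylinder_snoc p_def m_def nth_append)
    also have "\<dots> = p / V * (\<Sum>y\<le>Suc m. boundary_trans m y * f y)
        + p * (\<Sum>y\<le>Suc m. boundary_trans m y) * (c * real j) / V"
      by (simp add: sum.distrib sum_distrib_left sum_distrib_right sum_divide_distrib
          add_divide_distrib distrib_left mult_ac)
    also have "\<dots> \<le> p / V * (f m + c) + p * (c * real j) / V"
    proof (intro add_mono mult_left_mono drift p divide_right_mono mult_right_mono)
      show "p * (\<Sum>y\<le>Suc m. boundary_trans m y) \<le> p"
        unfolding p_def m_def by (rule measure_cylinder_mult_sum_boundary_trans_le[OF Suc.prems]) simp
    qed (use \<open>0 \<le> c\<close> \<open>0 < V\<close> in auto)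
    also have "\<dots> = p * (f m + c * real (Suc j)) / V"
      using \<open>0 < V\<close> by (simp add: field_simps)
    finally show ?thesis
      unfolding p_def m_def .
  qed (use \<open>0 \<le> c\<close> \<open>0 < V\<close> in \<open>rule measure_cylinder_hits_level_le_of_above\<close>)
qed

lemma AE_initial_state: "AE \<omega> in P. M 0 \<omega> = m0"
proof -
  have "AE \<omega> in P. \<omega> \<in> {\<omega> \<in> space P. M 0 \<omega> = m0}"
    using chain unfolding boundary_chain_def by (intro AE_prob_1) auto
  then show ?thesis
    by auto
qed

lemma prob_hits_level_le:
  assumes "\<And>y. 0 \<le> f y"
    and "\<And>m. (\<Sum>y\<le>Suc m. boundary_trans m y * f y) \<le> f m + c"
    and "0 \<le> c" and "0 < V"
  shows "prob (hits_level f V 0 N) \<le> (f m0 + c * real N) / V"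
proof -
  have "prob (hits_level f V 0 N) = prob (cylinder 0 [m0] \<inter> hits_level f V 0 N)"
    using AE_initial_state
    by (intro finite_measure_eq_AE) (auto simp: cylinder_def hits_level_def)
  also have "\<dots> \<le> prob (cylinder 0 [m0]) * (f m0 + c * real N) / V"
    using measure_cylinder_hits_level_le[OF assms, of "[m0]" 0 N] by simp
  also have "\<dots> \<le> (f m0 + c * real N) / V"
    using assms(1)[of m0] \<open>0 \<le> c\<close> \<open>0 < V\<close>
    by (intro divide_right_mono mult_left_le_one_le) auto
  finally show ?thesis .
qed

lemma prob_hits_dyadic_level_le:
  "prob (hits_level boundary_lyapunov (dyadic_level j) 0 (2 ^ Suc j))
     \<le> (boundary_lyapunov m0 + 3) * (real j + 1) powr (-3/2)"
proof -
  have "prob (hits_level boundary_lyapunov (dyadic_level j) 0 (2 ^ Suc j))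
      \<le> (boundary_lyapunov m0 + 4/3 * real (2 ^ Suc j)) / dyadic_level j"
    by (rule prob_hits_level_le[OF boundary_lyapunov_nonneg
          order_eq_refl[OF boundary_trans_lyapunov_drift] _ dyadic_level_pos]) simp
  also have "\<dots> \<le> (boundary_lyapunov m0 + 3) * 2 ^ j / dyadic_level j"
  proof (intro divide_right_mono)
    have "boundary_lyapunov m0 * 1 \<le> boundary_lyapunov m0 * 2 ^ j"
      by (intro mult_left_mono) (simp_all add: boundary_lyapunov_nonneg)
    moreover have "4/3 * real (2 ^ Suc j) \<le> 3 * (2::real) ^ j"
      by simp
    ultimately show "boundary_lyapunov m0 + 4/3 * real (2 ^ Suc j) \<le> (boundary_lyapunov m0 + 3) * 2 ^ j"
      unfolding distrib_right mult_1_right by linarith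
  qed (use dyadic_level_pos in \<open>simp add: less_imp_le\<close>)
  also have "\<dots> = (boundary_lyapunov m0 + 3) * (real j + 1) powr (-3/2)"
    unfolding dyadic_level_def by (simp add: powr_minus_divide)
  finally show ?thesis .
qed

lemma AE_eventually_below_dyadic_level:
  "AE \<omega> in P. eventually (\<lambda>j. \<forall>i\<le>2 ^ Suc j. boundary_lyapunov (M i \<omega>) < dyadic_level j) sequentially"
proof -
  let ?A = "\<lambda>j. hits_level boundary_lyapunov (dyadic_level j) 0 (2 ^ Suc j)"
  have "summable (\<lambda>j. real (Suc j) powr (-3/2))"
    by (subst summable_Suc_iff) (simp add: summable_real_powr_iff)
  then have "summable (\<lambda>j. (boundary_lyapunov m0 + 3) * (real j + 1) powr (-3/2))"
    by (intro summable_mult) (simp add: add.commute)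
  then have "summable (\<lambda>j. prob (?A j))"
    by (rule summable_comparison_test'[where N = 0]) (use prob_hits_dyadic_level_le in simp)
  then have "AE \<omega> in P. eventually (\<lambda>j. \<omega> \<in> space P - ?A j) sequentially"
    by (intro borel_cantelli_AE1) (simp_all add: emeasure_eq_measure)
  then show ?thesis
    by (rule AE_mp) (auto simp: hits_level_def not_le elim!: eventually_mono)
qed

end

theorem theorem3p2:
  fixes P :: "'a measure" and M :: "nat \<Rightarrow> 'a \<Rightarrow> nat" and m0 :: nat
  assumes "boundary_chain P M m0"
  shows "AE \<omega> in P. limsup (\<lambda>n. ereal (real (M n \<omega>) / (real n powr (2/3) * ln (real n)))) < \<infinity>"
proof -
  interpret boundary_markov_chain P M m0
    by unfold_locales (rule assms)
  show ?thesis
    using AE_eventually_below_dyadic_level by eventually_elim (rule limsup_growth_ratio_finite)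
qed

end
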